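(* For every integer $m\geq 2$ and every integer $n\geq 2$, the graph $mB_n$ (the disjoint union of $m$ copies of the book graph $B_n$) is $C_4$-supermagic.
   Context: All graphs are finite and simple. For a graph $H$, a graph $G=(V,E)$ has an $H$-covering if every edge of $G$ belongs to a subgraph of $G$ isomorphic to $H$. For such $G$, an $H$-magic labeling is a bijection $\lambda: V\cup E\to\{1,2,\dots,|V|+|E|\}$ for which there is a constant $c$ such that for every subgraph $H'=(V',E')$ of $G$ isomorphic to $H$, $\sum_{v\in V'}\lambda(v)+\sum_{e\in E'}\lambda(e)=c$. It is $H$-supermagic if moreover $\{\lambda(v):v\in V\}=\{1,\dots,|V|\}$; $G$ is $H$-supermagic if it admits such a labeling. $C_k$ is the cycle of length $k$. $mG$ denotes the disjoint union of $m$ copies of $G$. The book graph $B_n=K_{1,n}\times K_2$ has vertices $u_1,u_2,v_i,w_i$ ($1\le i\le n$) and edges $u_1u_2$, and $u_1w_i$, $u_2v_i$, $v_iw_i$ ($1\le i\le n$). *)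

theory Defs
  imports Main
begin

definition simple_graph :: "'a set \<Rightarrow> 'a set set \<Rightarrow> bool" where
  "simple_graph V E \<longleftrightarrow> finite V \<and>
     (\<forall>e\<in>E. \<exists>u v. u \<noteq> v \<and> u \<in> V \<and> v \<in> V \<and> e = {u, v})"

definition graph_iso :: "'b set \<Rightarrow> 'b set set \<Rightarrow> 'a set \<Rightarrow> 'a set set \<Rightarrow> bool" where
  "graph_iso VH EH V' E' \<longleftrightarrow>
     (\<exists>f. bij_betw f VH V' \<and>
          (\<forall>e\<in>E'. e \<subseteq> V') \<and>
          (\<forall>a\<in>VH. \<forall>b\<in>VH. {a, b} \<in> EH \<longleftrightarrow> {f a, f b} \<in> E'))"

definition iso_subgraphs ::
  "'b set \<Rightarrow> 'b set set \<Rightarrow> 'a set \<Rightarrow> 'a set set \<Rightarrow> ('a set \<times> 'a set set) set" where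
  "iso_subgraphs VH EH V E =
     {(V', E'). V' \<subseteq> V \<and> E' \<subseteq> E \<and> (\<forall>e\<in>E'. e \<subseteq> V') \<and> graph_iso VH EH V' E'}"

definition H_covering :: "'b set \<Rightarrow> 'b set set \<Rightarrow> 'a set \<Rightarrow> 'a set set \<Rightarrow> bool" where
  "H_covering VH EH V E \<longleftrightarrow>
     (\<forall>e\<in>E. \<exists>(V', E') \<in> iso_subgraphs VH EH V E. e \<in> E')"

text \<open>Labels are given on the disjoint sum of vertices (Inl) and edges (Inr).\<close>
definition H_magic_labeling ::
  "'b set \<Rightarrow> 'b set set \<Rightarrow> 'a set \<Rightarrow> 'a set set \<Rightarrow> ('a + 'a set \<Rightarrow> nat) \<Rightarrow> bool" where
  "H_magic_labeling VH EH V E lam \<longleftrightarrow>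
     bij_betw lam (Inl ` V \<union> Inr ` E) {1 .. card V + card E} \<and>
     (\<exists>c. \<forall>(V', E') \<in> iso_subgraphs VH EH V E.
            (\<Sum>v\<in>V'. lam (Inl v)) + (\<Sum>e\<in>E'. lam (Inr e)) = c)"

definition H_supermagic_labeling ::
  "'b set \<Rightarrow> 'b set set \<Rightarrow> 'a set \<Rightarrow> 'a set set \<Rightarrow> ('a + 'a set \<Rightarrow> nat) \<Rightarrow> bool" where
  "H_supermagic_labeling VH EH V E lam \<longleftrightarrow>
     H_magic_labeling VH EH V E lam \<and> (\<lambda>v. lam (Inl v)) ` V = {1 .. card V}"

definition H_supermagic :: "'b set \<Rightarrow> 'b set set \<Rightarrow> 'a set \<Rightarrow> 'a set set \<Rightarrow> bool" where
  "H_supermagic VH EH V E \<longleftrightarrow>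
     H_covering VH EH V E \<and> (\<exists>lam. H_supermagic_labeling VH EH V E lam)"

definition cycle_V :: "nat \<Rightarrow> nat set" where
  "cycle_V k = {0..<k}"
definition cycle_E :: "nat \<Rightarrow> nat set set" where
  "cycle_E k = {{i, (i + 1) mod k} | i. i < k}"

datatype book_vertex = U1 | U2 | Vb nat | Wb nat

definition book_V :: "nat \<Rightarrow> book_vertex set" where
  "book_V n = {U1, U2} \<union> Vb ` {1..n} \<union> Wb ` {1..n}"
definition book_E :: "nat \<Rightarrow> book_vertex set set" where
  "book_E n = {{U1, U2}} \<union> (\<lambda>i. {U1, Wb i}) ` {1..n} \<union> (\<lambda>i. {U2, Vb i}) ` {1..n}
              \<union> (\<lambda>i. {Vb i, Wb i}) ` {1..n}"

definition copies_V :: "nat \<Rightarrow> 'a set \<Rightarrow> (nat \<times> 'a) set" where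
  "copies_V m V = (\<Union>j\<in>{1..m}. (\<lambda>x. (j, x)) ` V)"
definition copies_E :: "nat \<Rightarrow> 'a set set \<Rightarrow> (nat \<times> 'a) set set" where
  "copies_E m E = (\<Union>j\<in>{1..m}. (\<lambda>e. (\<lambda>x. (j, x)) ` e) ` E)"

end

theory Submission
  imports Defs
begin

text \<open>
  The only 4-cycles of the book graph are its pages \<open>u\<^sub>1 u\<^sub>2 v\<^sub>i w\<^sub>i\<close>, so the
  \<open>C\<^sub>4\<close>-subgraphs of \<open>mB\<^sub>n\<close> are the \<open>mn\<close> pages of its copies. Give every vertex
  and every edge \<open>x\<close> of \<open>B\<^sub>n\<close> a weight \<open>w(x)\<close>, vertex weights running through
  \<open>0..2n+1\<close> and edge weights through \<open>0..3n\<close>, and a sign. The copy of \<open>x\<close> in the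
  \<open>j\<close>-th copy of \<open>B\<^sub>n\<close> gets the label \<open>m w(x) + (j - 1) + 1\<close> or
  \<open>m w(x) + (m - j) + 1\<close> according to the sign (edge labels are shifted past all vertex
  labels); these labels fill \<open>1..|V| + |E|\<close> exactly once, vertices first. Each page has four
  elements of either sign, so the copy-dependent parts of its label sum always add up to
  \<open>4(m - 1)\<close>, and the weights are chosen so that the weight of a page does not depend on
  \<open>i\<close>.
\<close>

section \<open>Four-cycles in simple graphs\<close>

lemma cycle_V_4: "cycle_V 4 = {0, 1, 2, 3}"
  unfolding cycle_V_def by auto

lemma cycle_E_4: "cycle_E 4 = {{0, 1}, {1, 2}, {2, 3}, {3, 0}}"
proof -
  have "{i. i < (4::nat)} = {0, 1, 2, 3}" by auto
  then show ?thesis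
    unfolding cycle_E_def setcompr_eq_image by (simp add: numeral_2_eq_2[symmetric])
qed

lemma iso_subgraph_C4E:
  assumes "(V', E') \<in> iso_subgraphs (cycle_V 4) (cycle_E 4) V E" and "simple_graph V E"
  obtains a b c d where "distinct [a, b, c, d]" "V' = {a, b, c, d}"
    "E' = {{a, b}, {b, c}, {c, d}, {d, a}}" "E' \<subseteq> E"
proof -
  from assms(1) have sub: "E' \<subseteq> E" and inV': "\<forall>e\<in>E'. e \<subseteq> V'"
    and "graph_iso (cycle_V 4) (cycle_E 4) V' E'"
    unfolding iso_subgraphs_def by auto
  then obtain f where bij: "bij_betw f (cycle_V 4) V'" and
    adj: "\<forall>x\<in>cycle_V 4. \<forall>y\<in>cycle_V 4. {x, y} \<in> cycle_E 4 \<longleftrightarrow> f ` {x, y} \<in> E'"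
    unfolding graph_iso_def by auto
  have "E' = image f ` cycle_E 4"
  proof
    show "image f ` cycle_E 4 \<subseteq> E'"
      using adj unfolding cycle_V_4 cycle_E_4 by simp
  next
    show "E' \<subseteq> image f ` cycle_E 4"
    proof
      fix e assume e: "e \<in> E'"
      then obtain p q where pq: "e = {p, q}"
        using sub assms(2) unfolding simple_graph_def by blast
      then have "{p, q} \<subseteq> f ` cycle_V 4"
        using inV' e bij_betw_imp_surj_on[OF bij] by auto
      then obtain x y where "x \<in> cycle_V 4" "y \<in> cycle_V 4" "e = f ` {x, y}"
        using pq by auto
      with adj e show "e \<in> image f ` cycle_E 4" by blast
    qed
  qed
  then have "E' = {{f 0, f 1}, {f 1, f 2}, {f 2, f 3}, {f 3, f 0}}"
    unfolding cycle_E_4 by simp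
  moreover have "V' = {f 0, f 1, f 2, f 3}"
    using bij_betw_imp_surj_on[OF bij] unfolding cycle_V_4 by auto
  moreover have "distinct [f 0, f 1, f 2, f 3]"
    using bij_betw_imp_inj_on[OF bij] unfolding cycle_V_4 by (auto dest: inj_onD)
  ultimately show ?thesis using that sub by blast
qed

lemma C4_in_iso_subgraphs:
  assumes "distinct [a, b, c, d]" "{a, b, c, d} \<subseteq> V" "{{a, b}, {b, c}, {c, d}, {d, a}} \<subseteq> E"
  shows "({a, b, c, d}, {{a, b}, {b, c}, {c, d}, {d, a}})
           \<in> iso_subgraphs (cycle_V 4) (cycle_E 4) V E"
proof -
  define f where "f = (!) [a, b, c, d]"
  have V': "f ` cycle_V 4 = {a, b, c, d}" and E': "image f ` cycle_E 4 = {{a, b}, {b, c}, {c, d}, {d, a}}"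
    unfolding f_def cycle_V_4 cycle_E_4 by (simp_all add: insert_commute)
  have inj: "inj_on f (cycle_V 4)"
    using assms(1) unfolding f_def cycle_V_4 inj_on_def by auto
  have "cycle_E 4 \<subseteq> Pow (cycle_V 4)"
    unfolding cycle_V_4 cycle_E_4 by auto
  then have "{x, y} \<in> cycle_E 4 \<longleftrightarrow> {f x, f y} \<in> {{a, b}, {b, c}, {c, d}, {d, a}}"
    if "x \<in> cycle_V 4" "y \<in> cycle_V 4" for x y
    using inj_on_image_mem_iff[OF inj_on_image_Pow[OF inj], of "{x, y}"] that
    unfolding E'[symmetric] by simp
  moreover have "bij_betw f (cycle_V 4) {a, b, c, d}"
    using inj V' by (simp add: bij_betw_def)
  ultimately have "graph_iso (cycle_V 4) (cycle_E 4) {a, b, c, d} {{a, b}, {b, c}, {c, d}, {d, a}}"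
    unfolding graph_iso_def by (intro exI[of _ f] conjI ballI) auto
  then show ?thesis using assms(2,3) unfolding iso_subgraphs_def by auto
qed

section \<open>Disjoint copies\<close>

lemma copies_V_eq: "copies_V m V = {1..m} \<times> V"
  unfolding copies_V_def by auto

lemma copies_E_eq: "copies_E m E = (\<lambda>(j, e). Pair j ` e) ` ({1..m} \<times> E)"
  unfolding copies_E_def by auto

lemma inj_image_Pair: "inj (image (Pair j))"
proof (rule injI)
  fix A B assume "Pair j ` A = Pair j ` B"
  then have "snd ` Pair j ` A = snd ` Pair j ` B" by simp
  then show "A = B" by (simp add: image_image)
qed

lemma doubleton_in_copies_E_iff:
  "{p, q} \<in> copies_E m E \<longleftrightarrow> fst p = fst q \<and> fst p \<in> {1..m} \<and> {snd p, snd q} \<in> E"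
proof
  assume "{p, q} \<in> copies_E m E"
  then obtain j e where j: "j \<in> {1..m}" and e: "e \<in> E" and pq: "{p, q} = Pair j ` e"
    unfolding copies_E_def by auto
  then have "p \<in> Pair j ` e" "q \<in> Pair j ` e" by blast+
  then have "fst p = j" "fst q = j" by auto
  moreover have "{snd p, snd q} = e"
    using arg_cong[OF pq, of "image snd"] by (simp add: image_image)
  ultimately show "fst p = fst q \<and> fst p \<in> {1..m} \<and> {snd p, snd q} \<in> E"
    using j e by simp
next
  assume "fst p = fst q \<and> fst p \<in> {1..m} \<and> {snd p, snd q} \<in> E"
  moreover have "fst p = fst q \<Longrightarrow> {p, q} = Pair (fst p) ` {snd p, snd q}"
    by (cases p; cases q) simp
  ultimately show "{p, q} \<in> copies_E m E"
    unfolding copies_E_eq by (intro image_eqI[of _ _ "(fst p, {snd p, snd q})"]) auto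
qed

lemma simple_graph_copies:
  assumes "simple_graph V E"
  shows "simple_graph (copies_V m V) (copies_E m E)"
  unfolding simple_graph_def
proof
  show "finite (copies_V m V)"
    using assms unfolding simple_graph_def copies_V_eq by simp
  show "\<forall>e\<in>copies_E m E. \<exists>p q. p \<noteq> q \<and> p \<in> copies_V m V \<and> q \<in> copies_V m V \<and> e = {p, q}"
  proof
    fix e assume "e \<in> copies_E m E"
    then obtain j e' where "j \<in> {1..m}" "e' \<in> E" "e = Pair j ` e'"
      unfolding copies_E_eq by blast
    moreover obtain u v where "u \<noteq> v" "u \<in> V" "v \<in> V" "e' = {u, v}"
      using assms \<open>e' \<in> E\<close> unfolding simple_graph_def by blast
    ultimately show "\<exists>p q. p \<noteq> q \<and> p \<in> copies_V m V \<and> q \<in> copies_V m V \<and> e = {p, q}"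
      unfolding copies_V_eq by (intro exI[of _ "(j, u)"] exI[of _ "(j, v)"]) auto
  qed
qed

lemma card_copies_V: "finite V \<Longrightarrow> card (copies_V m V) = m * card V"
  unfolding copies_V_eq by (simp add: card_cartesian_product)

lemma card_copies_E:
  assumes "simple_graph V E"
  shows "card (copies_E m E) = m * card E"
proof -
  have "finite V" and edges: "\<forall>e\<in>E. \<exists>u v. e = {u, v} \<and> u \<in> V \<and> v \<in> V"
    using assms unfolding simple_graph_def by blast+
  then have "finite E"
    by (auto intro: finite_subset[of E "Pow V"])
  have "inj_on (\<lambda>(j, e). Pair j ` e) ({1..m} \<times> E)"
  proof (rule inj_onI, clarify)
    fix j e j' e' assume "e \<in> E" and eq: "Pair j ` e = Pair j' ` e'"
    obtain x where "x \<in> e" using edges \<open>e \<in> E\<close> by blast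
    then have "(j, x) \<in> Pair j' ` e'" using eq by (metis imageI)
    then have "j = j'" by auto
    moreover have "e = e'" using arg_cong[OF eq, of "image snd"] by (simp add: image_image)
    ultimately show "j = j' \<and> e = e'" ..
  qed
  with \<open>finite E\<close> show ?thesis
    unfolding copies_E_eq by (simp add: card_image card_cartesian_product)
qed

definition copy_offset :: "nat \<Rightarrow> bool \<Rightarrow> nat \<Rightarrow> nat" where
  "copy_offset m p j = (if p then j - 1 else m - j)"

lemma copy_offset_lt: "j \<in> {1..m} \<Longrightarrow> copy_offset m p j < m"
  unfolding copy_offset_def by auto

lemma copy_offset_True_False:
  "j \<in> {1..m} \<Longrightarrow> copy_offset m True j + copy_offset m False j = m - 1"
  unfolding copy_offset_def by auto

lemma image_copy_offset_blowup:
  assumes "f ` A = {0..<a}"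
  shows "(\<lambda>(j, x). c + m * f x + copy_offset m (p x) j + 1) ` ({1..m} \<times> A) = {c + 1..c + m * a}"
proof
  show "(\<lambda>(j, x). c + m * f x + copy_offset m (p x) j + 1) ` ({1..m} \<times> A) \<subseteq> {c + 1..c + m * a}"
  proof clarify
    fix j x assume j: "j \<in> {1..m}" and "x \<in> A"
    then have "f x < a" using assms by (metis atLeastLessThan_iff imageI)
    then have "f x + 1 \<le> a" by simp
    then have "m * f x + m \<le> m * a"
      using mult_le_mono2[of "f x + 1" a m] by simp
    then show "c + m * f x + copy_offset m (p x) j + 1 \<in> {c + 1..c + m * a}"
      using copy_offset_lt[OF j, of "p x"] by simp
  qed
next
  show "{c + 1..c + m * a} \<subseteq> (\<lambda>(j, x). c + m * f x + copy_offset m (p x) j + 1) ` ({1..m} \<times> A)"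
  proof
    fix y assume "y \<in> {c + 1..c + m * a}"
    then have y: "y - c - 1 < m * a" and c: "c + 1 \<le> y" by auto
    then have "0 < m" by (cases m) auto
    define z where "z = y - c - 1"
    have "z div m < a" using y \<open>0 < m\<close> by (simp add: z_def div_less_iff_less_mult mult.commute)
    then obtain x where x: "x \<in> A" "f x = z div m"
      using assms by (metis atLeastLessThan_iff imageE zero_le)
    define j where "j = (if p x then z mod m + 1 else m - z mod m)"
    have "z mod m < m" using \<open>0 < m\<close> by simp
    then have "j \<in> {1..m}" and "copy_offset m (p x) j = z mod m"
      unfolding j_def copy_offset_def by auto
    then have "y = c + m * f x + copy_offset m (p x) j + 1"
      using c x(2) unfolding z_def by simp
    then show "y \<in> (\<lambda>(j, x). c + m * f x + copy_offset m (p x) j + 1) ` ({1..m} \<times> A)"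
      using \<open>j \<in> {1..m}\<close> x(1) by force
  qed
qed

lemma sum_scaled_offset:
  "(\<Sum>x\<in>S. m * w x + c x + 1) = m * (\<Sum>x\<in>S. w x) + (\<Sum>x\<in>S. c x) + card S"
  unfolding sum.distrib sum_distrib_left by simp

section \<open>The book graph and its four-cycles\<close>

fun book_adj :: "nat \<Rightarrow> book_vertex \<Rightarrow> book_vertex \<Rightarrow> bool" where
  "book_adj n U1 U2 = True"
| "book_adj n U2 U1 = True"
| "book_adj n U1 (Wb i) = (i \<in> {1..n})"
| "book_adj n (Wb i) U1 = (i \<in> {1..n})"
| "book_adj n U2 (Vb i) = (i \<in> {1..n})"
| "book_adj n (Vb i) U2 = (i \<in> {1..n})"
| "book_adj n (Vb i) (Wb k) = (i = k \<and> i \<in> {1..n})"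
| "book_adj n (Wb i) (Vb k) = (i = k \<and> i \<in> {1..n})"
| "book_adj n _ _ = False"

definition book_page_V :: "nat \<Rightarrow> book_vertex set" where
  "book_page_V i = {U1, U2, Vb i, Wb i}"

definition book_page_E :: "nat \<Rightarrow> book_vertex set set" where
  "book_page_E i = {{U1, U2}, {U2, Vb i}, {Vb i, Wb i}, {Wb i, U1}}"

lemma mem_book_E_iff:
  "e \<in> book_E n \<longleftrightarrow>
     e = {U1, U2} \<or> (\<exists>i\<in>{1..n}. e = {U1, Wb i} \<or> e = {U2, Vb i} \<or> e = {Vb i, Wb i})"
  unfolding book_E_def by blast

lemma doubleton_in_book_E_iff: "{a, b} \<in> book_E n \<longleftrightarrow> book_adj n a b"
  unfolding mem_book_E_iff by (cases a; cases b) (auto simp: doubleton_eq_iff)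

lemma simple_graph_book: "simple_graph (book_V n) (book_E n)"
  unfolding simple_graph_def book_V_def book_E_def by auto

lemma book_page_E_subset: "i \<in> {1..n} \<Longrightarrow> book_page_E i \<subseteq> book_E n"
  unfolding book_page_E_def book_E_def by auto

lemma book_page_E_covers:
  assumes "e \<in> book_E n" and "1 \<le> n"
  shows "\<exists>i\<in>{1..n}. e \<in> book_page_E i"
  using assms unfolding mem_book_E_iff book_page_E_def by (auto simp: insert_commute)

lemma book_4cycle_cases:
  assumes "book_adj n a b" "book_adj n b c" "book_adj n c d" "book_adj n d a" "a \<noteq> c" "b \<noteq> d"
  shows "\<exists>i\<in>{1..n}. (a, b, c, d) \<in> {(U1, U2, Vb i, Wb i), (U2, Vb i, Wb i, U1),
     (Vb i, Wb i, U1, U2), (Wb i, U1, U2, Vb i), (U1, Wb i, Vb i, U2), (Wb i, Vb i, U2, U1),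
     (Vb i, U2, U1, Wb i), (U2, U1, Wb i, Vb i)}"
  using assms
  apply (cases a; cases b; simp_all)
  apply (cases c; simp_all; cases d; simp_all)+
  done

lemma book_4cycle:
  assumes "book_adj n a b" "book_adj n b c" "book_adj n c d" "book_adj n d a" "a \<noteq> c" "b \<noteq> d"
  obtains i where "i \<in> {1..n}" "{a, b, c, d} = book_page_V i"
    "{{a, b}, {b, c}, {c, d}, {d, a}} = book_page_E i"
proof -
  from book_4cycle_cases[OF assms] obtain i where "i \<in> {1..n}" and
    "(a, b, c, d) \<in> {(U1, U2, Vb i, Wb i), (U2, Vb i, Wb i, U1),
     (Vb i, Wb i, U1, U2), (Wb i, U1, U2, Vb i), (U1, Wb i, Vb i, U2), (Wb i, Vb i, U2, U1),
     (Vb i, U2, U1, Wb i), (U2, U1, Wb i, Vb i)}"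
    by blast
  moreover from this(2) have "{a, b, c, d} = book_page_V i \<and>
      {{a, b}, {b, c}, {c, d}, {d, a}} = book_page_E i"
    unfolding book_page_V_def book_page_E_def by (elim insertE emptyE; simp add: insert_commute)
  ultimately show ?thesis using that by blast
qed

lemma card_book_V: "card (book_V n) = 2 * n + 2"
proof -
  have "book_V n = {U1, U2} \<union> (Vb ` {1..n} \<union> Wb ` {1..n})"
    unfolding book_V_def by auto
  moreover have "card (Vb ` {1..n}) = n" "card (Wb ` {1..n}) = n"
    by (simp_all add: card_image inj_on_def)
  moreover have "card (Vb ` {1..n} \<union> Wb ` {1..n}) = card (Vb ` {1..n}) + card (Wb ` {1..n})"
    by (rule card_Un_disjoint) auto
  moreover have "card ({U1, U2} \<union> (Vb ` {1..n} \<union> Wb ` {1..n})) =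
      2 + card (Vb ` {1..n} \<union> Wb ` {1..n})"
    by (subst card_Un_disjoint) auto
  ultimately show ?thesis by simp
qed

lemma card_book_E: "card (book_E n) = 3 * n + 1"
proof -
  let ?A = "(\<lambda>i. {U1, Wb i}) ` {1..n}" and ?B = "(\<lambda>i. {U2, Vb i}) ` {1..n}"
    and ?C = "(\<lambda>i. {Vb i, Wb i}) ` {1..n}"
  have "book_E n = {{U1, U2}} \<union> (?A \<union> (?B \<union> ?C))"
    unfolding book_E_def by auto
  moreover have "card ?A = n" "card ?B = n" "card ?C = n"
    by (simp_all add: card_image inj_on_def doubleton_eq_iff)
  moreover have "card (?B \<union> ?C) = card ?B + card ?C"
    by (rule card_Un_disjoint) (auto simp: doubleton_eq_iff)
  moreover have "card (?A \<union> (?B \<union> ?C)) = card ?A + card (?B \<union> ?C)"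
    by (rule card_Un_disjoint) (auto simp: doubleton_eq_iff)
  moreover have "card ({{U1, U2}} \<union> (?A \<union> (?B \<union> ?C))) = 1 + card (?A \<union> (?B \<union> ?C))"
    by (subst card_Un_disjoint) (auto simp: doubleton_eq_iff)
  ultimately show ?thesis by simp
qed

lemma card_copies_book:
  "card (copies_V m (book_V n)) = m * (2 * n + 2)"
  "card (copies_E m (book_E n)) = m * (3 * n + 1)"
  using simple_graph_book card_copies_V[of "book_V n"] card_copies_E[OF simple_graph_book]
  unfolding simple_graph_def by (simp_all add: card_book_V card_book_E)

lemma C4_subgraphs_copies_book:
  "iso_subgraphs (cycle_V 4) (cycle_E 4) (copies_V m (book_V n)) (copies_E m (book_E n)) =
     (\<lambda>(j, i). (Pair j ` book_page_V i, image (Pair j) ` book_page_E i)) ` ({1..m} \<times> {1..n})"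
  (is "?I = ?P")
proof
  show "?I \<subseteq> ?P"
  proof (clarify)
    fix V' E' assume "(V', E') \<in> ?I"
    then obtain p q r s where pqrs: "distinct [p, q, r, s]" "V' = {p, q, r, s}"
      and E': "E' = {{p, q}, {q, r}, {r, s}, {s, p}}" "E' \<subseteq> copies_E m (book_E n)"
      using iso_subgraph_C4E simple_graph_copies[OF simple_graph_book] by metis
    then have "{p, q} \<in> copies_E m (book_E n)" "{q, r} \<in> copies_E m (book_E n)"
      "{r, s} \<in> copies_E m (book_E n)" "{s, p} \<in> copies_E m (book_E n)"
      by auto
    then obtain j a b c d where j: "j \<in> {1..m}" and
      abcd: "p = (j, a)" "q = (j, b)" "r = (j, c)" "s = (j, d)" and
      adj: "book_adj n a b" "book_adj n b c" "book_adj n c d" "book_adj n d a"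
      unfolding doubleton_in_copies_E_iff doubleton_in_book_E_iff
      by (metis prod.collapse)
    moreover have "a \<noteq> c" "b \<noteq> d" using pqrs(1) abcd by auto
    ultimately obtain i where "i \<in> {1..n}" "{a, b, c, d} = book_page_V i"
      "{{a, b}, {b, c}, {c, d}, {d, a}} = book_page_E i"
      using book_4cycle by metis
    moreover have "V' = Pair j ` {a, b, c, d}" "E' = image (Pair j) ` {{a, b}, {b, c}, {c, d}, {d, a}}"
      using pqrs(2) E'(1) abcd by simp_all
    ultimately show "(V', E') \<in> ?P" using j by force
  qed
next
  show "?P \<subseteq> ?I"
  proof (clarify)
    fix j i assume j: "j \<in> {1..m}" and i: "i \<in> {1..n}"
    have "({(j, U1), (j, U2), (j, Vb i), (j, Wb i)},
           {{(j, U1), (j, U2)}, {(j, U2), (j, Vb i)}, {(j, Vb i), (j, Wb i)}, {(j, Wb i), (j, U1)}}) \<in> ?I"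
      using j i by (intro C4_in_iso_subgraphs)
        (auto simp: copies_V_eq book_V_def doubleton_in_copies_E_iff doubleton_in_book_E_iff)
    then show "(Pair j ` book_page_V i, image (Pair j) ` book_page_E i) \<in> ?I"
      by (simp add: book_page_V_def book_page_E_def)
  qed
qed

section \<open>The labeling\<close>

text \<open>
  The weights of \<open>Vb i\<close> and \<open>Wb i\<close> run along two interleaved decreasing sequences, so
  that their sum decreases by one when \<open>i\<close> increases by one (lemma
  \<open>book_vweight_page\<close>); which value is left over for \<open>U1\<close> depends on the parity
  of \<open>n\<close>.
\<close>

fun book_vweight :: "nat \<Rightarrow> book_vertex \<Rightarrow> nat" where
  "book_vweight n U1 = (if even n then n div 2 else 2 * n)"
| "book_vweight n U2 = 2 * n + 1"
| "book_vweight n (Vb i) =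
     (if odd i then 2 * (n div 2) - (i - 1) div 2 else n div 2 - 1 - (i - 1) div 2)"
| "book_vweight n (Wb i) =
     (if odd i then 3 * (n div 2) + n mod 2 - (i - 1) div 2
      else 4 * (n div 2) + n mod 2 - (i - 1) div 2)"

lemma book_vweight_Vb_odd [simp]: "book_vweight n (Vb (2 * t + 1)) = 2 * (n div 2) - t"
  by simp

lemma book_vweight_Vb_even [simp]: "book_vweight n (Vb (2 * t + 2)) = n div 2 - 1 - t"
  by simp

lemma book_vweight_Wb_odd [simp]: "book_vweight n (Wb (2 * t + 1)) = 3 * (n div 2) + n mod 2 - t"
  by simp

lemma book_vweight_Wb_even [simp]: "book_vweight n (Wb (2 * t + 2)) = 4 * (n div 2) + n mod 2 - t"
  by simp

lemma book_vweight_lt: "book_vweight n x < 2 * n + 2"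
  by (cases x) auto

lemma book_vweight_surj:
  assumes "y < 2 * n + 2"
  shows "y \<in> book_vweight n ` book_V n"
proof -
  define s r where "s = n div 2" and "r = n mod 2"
  have n: "n = 2 * s + r" "r \<le> 1" unfolding s_def r_def by simp_all
  have U1: "book_vweight n U1 = (if r = 0 then s else 4 * s + 2)"
    unfolding s_def r_def by (cases "even n") (auto elim: oddE)
  have V: "Vb i \<in> book_V n" "Wb i \<in> book_V n" if "1 \<le> i" "i \<le> n" for i
    using that unfolding book_V_def by auto
  have UV: "U1 \<in> book_V n" "U2 \<in> book_V n" unfolding book_V_def by auto
  consider "y = book_vweight n U1" | "y = book_vweight n U2" | "y < s"
    | "s \<le> y" "y \<le> 2 * s" "y \<noteq> book_vweight n U1" | "2 * s < y" "y \<le> 3 * s + r"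
    | "3 * s + r < y" "y \<le> 4 * s + r"
    using assms n U1 by fastforce
  then show ?thesis
  proof cases
    case 3
    then have "book_vweight n (Vb (2 * (s - 1 - y) + 2)) = y" by (simp add: s_def)
    then show ?thesis using V(1)[of "2 * (s - 1 - y) + 2"] 3 n by force
  next
    case 4
    then have "book_vweight n (Vb (2 * (2 * s - y) + 1)) = y" by (simp add: s_def)
    moreover have "2 * (2 * s - y) + 1 \<le> n" using 4 n U1 by (cases "r = 0") auto
    ultimately show ?thesis using V(1)[of "2 * (2 * s - y) + 1"] by force
  next
    case 5
    then have "book_vweight n (Wb (2 * (3 * s + r - y) + 1)) = y" by (simp add: s_def r_def)
    then show ?thesis using V(2)[of "2 * (3 * s + r - y) + 1"] 5 n by force
  next
    case 6
    then have "book_vweight n (Wb (2 * (4 * s + r - y) + 2)) = y" by (simp add: s_def r_def)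
    then show ?thesis using V(2)[of "2 * (4 * s + r - y) + 2"] 6 n by force
  qed (use UV in blast)+
qed

lemma book_vweight_image: "book_vweight n ` book_V n = {0..<2 * n + 2}"
  using book_vweight_lt book_vweight_surj by fastforce

lemma book_vweight_page:
  assumes "i \<in> {1..n}"
  shows "book_vweight n (Vb i) + book_vweight n (Wb i) + i = 5 * (n div 2) + n mod 2 + 1"
proof -
  have "n = 2 * (n div 2) + n mod 2" "n mod 2 \<le> 1" by simp_all
  moreover have "i = 2 * ((i - 1) div 2) + 1 \<or> i = 2 * ((i - 1) div 2) + 2"
    using assms by auto
  then obtain t where "i = 2 * t + 1 \<or> i = 2 * t + 2" by blast
  ultimately show ?thesis using assms by auto
qed

definition book_eweight :: "nat \<Rightarrow> book_vertex set \<Rightarrow> nat" where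
  "book_eweight n e =
     (if e = {U1, U2} then 3 * n
      else if U1 \<in> e then (THE i. Wb i \<in> e) - 1
      else if U2 \<in> e then 2 * n - (THE i. Vb i \<in> e)
      else 2 * n + (THE i. Vb i \<in> e) - 1)"

lemma book_eweight_simps [simp]:
  "book_eweight n {U1, U2} = 3 * n"
  "book_eweight n {U1, Wb i} = i - 1"
  "book_eweight n {Wb i, U1} = i - 1"
  "book_eweight n {U2, Vb i} = 2 * n - i"
  "book_eweight n {Vb i, Wb i} = 2 * n + i - 1"
  by (simp_all add: book_eweight_def doubleton_eq_iff)

lemma book_eweight_image: "book_eweight n ` book_E n = {0..<3 * n + 1}"
proof
  show "book_eweight n ` book_E n \<subseteq> {0..<3 * n + 1}"
    by (auto simp: mem_book_E_iff) linarith+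
next
  have page_edge: "y \<in> book_eweight n ` book_E n"
    if "e \<in> book_page_E i" "i \<in> {1..n}" "book_eweight n e = y" for e i y
    using that book_page_E_subset by blast
  show "{0..<3 * n + 1} \<subseteq> book_eweight n ` book_E n"
  proof
    fix y assume "y \<in> {0..<3 * n + 1}"
    then consider "y < n" | "n \<le> y" "y < 2 * n" | "2 * n \<le> y" "y < 3 * n" | "y = 3 * n"
      by fastforce
    then show "y \<in> book_eweight n ` book_E n"
    proof cases
      case 1
      then show ?thesis
        by (intro page_edge[of "{Wb (y + 1), U1}" "y + 1"]) (auto simp: book_page_E_def)
    next
      case 2
      then show ?thesis by (intro page_edge[of "{U2, Vb (2 * n - y)}" "2 * n - y"]) (auto simp: book_page_E_def)
    next
      case 3
      then show ?thesis
        by (intro page_edge[of "{Vb (y + 1 - 2 * n), Wb (y + 1 - 2 * n)}" "y + 1 - 2 * n"])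
          (auto simp: book_page_E_def)
    next
      case 4
      have "{U1, U2} \<in> book_E n" by (simp add: book_E_def)
      then show ?thesis by (rule rev_image_eqI) (simp add: 4)
    qed
  qed
qed

fun book_vsign :: "book_vertex \<Rightarrow> bool" where
  "book_vsign U1 = True"
| "book_vsign U2 = False"
| "book_vsign (Vb i) = True"
| "book_vsign (Wb i) = False"

definition book_esign :: "book_vertex set \<Rightarrow> bool" where
  "book_esign e \<longleftrightarrow> (\<exists>i. Wb i \<in> e)"

definition book_labeling ::
    "nat \<Rightarrow> nat \<Rightarrow> (nat \<times> book_vertex) + (nat \<times> book_vertex) set \<Rightarrow> nat" where
  "book_labeling m n = case_sum
     (\<lambda>(j, x). m * book_vweight n x + copy_offset m (book_vsign x) j + 1)
     (\<lambda>e. m * (2 * n + 2) + m * book_eweight n (snd ` e)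
            + copy_offset m (book_esign (snd ` e)) (the_elem (fst ` e)) + 1)"

lemma book_labeling_Inl [simp]:
  "book_labeling m n (Inl (j, x)) = m * book_vweight n x + copy_offset m (book_vsign x) j + 1"
  by (simp add: book_labeling_def)

lemma book_labeling_Inr_Pair [simp]:
  assumes "e \<noteq> {}"
  shows "book_labeling m n (Inr (Pair j ` e)) =
    m * (2 * n + 2) + m * book_eweight n e + copy_offset m (book_esign e) j + 1"
proof -
  have "fst ` Pair j ` e = {j}" using assms by (auto simp: image_image)
  then show ?thesis by (simp add: book_labeling_def image_image)
qed

lemma book_labeling_vertex_image:
  "(\<lambda>v. book_labeling m n (Inl v)) ` copies_V m (book_V n) = {1..m * (2 * n + 2)}"
proof -
  have "(\<lambda>v. book_labeling m n (Inl v)) ` copies_V m (book_V n) =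
      (\<lambda>(j, x). 0 + m * book_vweight n x + copy_offset m (book_vsign x) j + 1) ` ({1..m} \<times> book_V n)"
    unfolding copies_V_eq by (rule image_cong) auto
  also have "\<dots> = {0 + 1..0 + m * (2 * n + 2)}"
    by (rule image_copy_offset_blowup[OF book_vweight_image])
  finally show ?thesis by simp
qed

lemma book_labeling_edge_image:
  "(\<lambda>e. book_labeling m n (Inr e)) ` copies_E m (book_E n) =
     {m * (2 * n + 2) + 1..m * (2 * n + 2) + m * (3 * n + 1)}"
proof -
  have nonempty: "e \<noteq> {}" if "e \<in> book_E n" for e
    using that unfolding book_E_def by auto
  have "(\<lambda>e. book_labeling m n (Inr e)) ` copies_E m (book_E n) =
      (\<lambda>(j, e). m * (2 * n + 2) + m * book_eweight n e + copy_offset m (book_esign e) j + 1)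
        ` ({1..m} \<times> book_E n)"
    unfolding copies_E_eq image_image by (rule image_cong) (auto simp: nonempty)
  also have "\<dots> = {m * (2 * n + 2) + 1..m * (2 * n + 2) + m * (3 * n + 1)}"
    by (rule image_copy_offset_blowup[OF book_eweight_image])
  finally show ?thesis .
qed

lemma book_labeling_bij:
  "bij_betw (book_labeling m n) (Inl ` copies_V m (book_V n) \<union> Inr ` copies_E m (book_E n))
     {1..card (copies_V m (book_V n)) + card (copies_E m (book_E n))}"
proof -
  let ?V = "copies_V m (book_V n)" and ?E = "copies_E m (book_E n)"
  have "simple_graph ?V ?E" by (rule simple_graph_copies[OF simple_graph_book])
  then have fin: "finite ?V" "finite ?E"
    unfolding simple_graph_def by (auto intro: finite_subset[of ?E "Pow ?V"])
  have "card (Inl ` ?V \<union> Inr ` ?E) = card ?V + card ?E"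
    using fin by (subst card_Un_disjoint) (auto simp: card_image)
  moreover have "book_labeling m n ` (Inl ` ?V \<union> Inr ` ?E) = {1..card ?V + card ?E}"
    unfolding image_Un image_image card_copies_book book_labeling_vertex_image book_labeling_edge_image
    by auto
  ultimately show ?thesis
    using fin by (intro bij_betw_imageI eq_card_imp_inj_on) auto
qed

definition book_magic_constant :: "nat \<Rightarrow> nat \<Rightarrow> nat" where
  "book_magic_constant m n =
     m * (book_vweight n U1 + 17 * n + 8 + 5 * (n div 2) + n mod 2) + 4 * (m - 1) + 8"

lemma book_labeling_page_sum:
  assumes j: "j \<in> {1..m}" and i: "i \<in> {1..n}"
  shows "(\<Sum>v\<in>Pair j ` book_page_V i. book_labeling m n (Inl v))
       + (\<Sum>e\<in>image (Pair j) ` book_page_E i. book_labeling m n (Inr e)) = book_magic_constant m n"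
proof -
  let ?T = "copy_offset m True j" and ?F = "copy_offset m False j"
  let ?wV = "book_vweight n U1 + (2 * n + 1) + book_vweight n (Vb i) + book_vweight n (Wb i)"
  let ?wE = "4 * (2 * n + 2) + 3 * n + (2 * n - i) + (2 * n + i - 1) + (i - 1)"
  have "(\<Sum>v\<in>Pair j ` book_page_V i. book_labeling m n (Inl v)) =
      (\<Sum>x\<in>book_page_V i. m * book_vweight n x + copy_offset m (book_vsign x) j + 1)"
    by (simp add: sum.reindex inj_on_def)
  also have "\<dots> = m * ?wV + 2 * (?T + ?F) + 4"
    unfolding sum_scaled_offset by (simp add: book_page_V_def)
  finally have vertices: "(\<Sum>v\<in>Pair j ` book_page_V i. book_labeling m n (Inl v)) = \<dots>" .
  have "(\<Sum>e\<in>image (Pair j) ` book_page_E i. book_labeling m n (Inr e)) =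
      (\<Sum>e\<in>book_page_E i. book_labeling m n (Inr (Pair j ` e)))"
    by (simp add: sum.reindex inj_on_subset[OF inj_image_Pair])
  also have "\<dots> = (\<Sum>e\<in>book_page_E i.
      m * (2 * n + 2 + book_eweight n e) + copy_offset m (book_esign e) j + 1)"
  proof (rule sum.cong[OF refl])
    fix e assume "e \<in> book_page_E i"
    then have "e \<noteq> {}" by (auto simp: book_page_E_def)
    then show "book_labeling m n (Inr (Pair j ` e)) =
        m * (2 * n + 2 + book_eweight n e) + copy_offset m (book_esign e) j + 1"
      by (simp add: distrib_left)
  qed
  also have "\<dots> = m * ?wE + 2 * (?T + ?F) + 4"
  proof -
    have "(\<Sum>e\<in>book_page_E i. 2 * n + 2 + book_eweight n e) = ?wE"
      "(\<Sum>e\<in>book_page_E i. copy_offset m (book_esign e) j) = 2 * (?T + ?F)"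
      "card (book_page_E i) = 4"
      by (simp_all add: book_page_E_def doubleton_eq_iff book_esign_def)
    then show ?thesis unfolding sum_scaled_offset by simp
  qed
  finally have edges: "(\<Sum>e\<in>image (Pair j) ` book_page_E i. book_labeling m n (Inr e)) = \<dots>" .
  have "?wV + ?wE = book_vweight n U1 + 17 * n + 8 + 5 * (n div 2) + n mod 2"
    using book_vweight_page[OF i] i by (simp del: book_vweight.simps)
  then have "m * ?wV + m * ?wE = m * (book_vweight n U1 + 17 * n + 8 + 5 * (n div 2) + n mod 2)"
    by (simp only: distrib_left[symmetric])
  then show ?thesis
    unfolding vertices edges book_magic_constant_def copy_offset_True_False[OF j] by linarith
qed

lemma C4_covering_copies_book:
  assumes "1 \<le> n"
  shows "H_covering (cycle_V 4) (cycle_E 4) (copies_V m (book_V n)) (copies_E m (book_E n))"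
  unfolding H_covering_def C4_subgraphs_copies_book
proof
  fix e assume "e \<in> copies_E m (book_E n)"
  then obtain j e' where j: "j \<in> {1..m}" and "e' \<in> book_E n" and e: "e = Pair j ` e'"
    unfolding copies_E_eq by auto
  then obtain i where i: "i \<in> {1..n}" and "e' \<in> book_page_E i"
    using book_page_E_covers assms by blast
  then show "\<exists>(V', E') \<in> (\<lambda>(j, i). (Pair j ` book_page_V i, image (Pair j) ` book_page_E i))
      ` ({1..m} \<times> {1..n}). e \<in> E'"
    using j e by (intro bexI[of _ "(Pair j ` book_page_V i, image (Pair j) ` book_page_E i)"]) auto
qed

lemma C4_supermagic_labeling_copies_book:
  "H_supermagic_labeling (cycle_V 4) (cycle_E 4) (copies_V m (book_V n)) (copies_E m (book_E n))
     (book_labeling m n)"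
  unfolding H_supermagic_labeling_def H_magic_labeling_def C4_subgraphs_copies_book
  using book_labeling_bij book_labeling_vertex_image book_labeling_page_sum
  by (auto simp: card_copies_book intro!: exI[of _ "book_magic_constant m n"])

theorem theorem7:
  fixes m n :: nat
  assumes "m \<ge> 2" and "n \<ge> 2"
  shows "H_supermagic (cycle_V 4) (cycle_E 4)
           (copies_V m (book_V n)) (copies_E m (book_E n))"
proof -
  \<comment> \<open>only \<open>n \<ge> 1\<close> is needed\<close>
  have "1 \<le> n" using assms(2) by simp
  then show ?thesis
    unfolding H_supermagic_def
    using C4_covering_copies_book C4_supermagic_labeling_copies_book by blast
qed
end
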